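(* For all $1\le k\le n$ and $a\in\mathbb{N}_0$, in $A_n$ we have \[ \omega_k^a = \sum_{\ell = 1}^{k} (-1)^{a+k+\ell}\, h_{a+\ell-k}(x_\ell,\dots,x_k)\, \omega_{\ell}, \] where $h_j(x_\ell,\dots,x_k)$ is the $j$-th complete homogeneous symmetric polynomial in $x_\ell,\dots,x_k$ (zero for $j<0$).
   Context: $A_n$ is the bigraded $\mathbb{Z}$-superalgebra of operators on $R=\mathbb{Z}[x_1,\dots,x_n]\otimes\bigwedge^\bullet(\omega_1,\dots,\omega_n)$ generated by the Demazure operators and multiplication by elements of $R$; in particular it contains the (commuting, even) $x_i$ and (anticommuting, odd) $\omega_i$. Labeled elements are defined recursively by $\omega_k^0=\omega_k$, $\omega_0^a=0$, and $\omega_k^a=\omega_{k-1}^{a-1}-x_k\omega_k^{a-1}$ for $a\ge1$. *)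

theory Defs
  imports Main "HOL-Library.Poly_Mapping"
begin

type_synonym xpoly = "(nat \<Rightarrow>\<^sub>0 nat) \<Rightarrow>\<^sub>0 int"

text \<open>The superalgebra R = Z[x] tensor Lambda(omega): an element is a family of
  polynomial coefficients indexed by (finite) sets S of omega-indices; the set S stands
  for the wedge product of omega_s, s in S, in increasing order.\<close>
type_synonym relt = "nat set \<Rightarrow> xpoly"

text \<open>Sign of reordering omega_S omega_T (S, T disjoint) into increasing order.\<close>
definition ext_sign :: "nat set \<Rightarrow> nat set \<Rightarrow> xpoly" where
  "ext_sign S T = (-1) ^ card {(s, t). s \<in> S \<and> t \<in> T \<and> t < s}"

definition rmul :: "relt \<Rightarrow> relt \<Rightarrow> relt" where
  "rmul f g = (\<lambda>U. \<Sum>S\<in>Pow U. ext_sign S (U - S) * f S * g (U - S))"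

definition rzero :: relt where
  "rzero = (\<lambda>_. 0)"

definition rsub :: "relt \<Rightarrow> relt \<Rightarrow> relt" where
  "rsub f g = (\<lambda>U. f U - g U)"

definition even_elt :: "xpoly \<Rightarrow> relt" where
  "even_elt p = (\<lambda>U. if U = {} then p else 0)"

definition xvar_poly :: "nat \<Rightarrow> xpoly" where
  "xvar_poly i = Poly_Mapping.single (Poly_Mapping.single i 1) 1"

definition xvar :: "nat \<Rightarrow> relt" where
  "xvar i = even_elt (xvar_poly i)"

definition omega :: "nat \<Rightarrow> relt" where
  "omega i = (\<lambda>U. if U = {i} then 1 else 0)"

fun omega_lab :: "nat \<Rightarrow> nat \<Rightarrow> relt" where
  "omega_lab 0 a = rzero"
| "omega_lab (Suc k) 0 = omega (Suc k)"
| "omega_lab (Suc k) (Suc a) =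
     rsub (omega_lab k a) (rmul (xvar (Suc k)) (omega_lab (Suc k) a))"

definition hcs :: "int \<Rightarrow> nat \<Rightarrow> nat \<Rightarrow> xpoly" where
  "hcs j l k = (if j < 0 then 0 else
     (\<Sum>m\<in>{m :: nat \<Rightarrow>\<^sub>0 nat. Poly_Mapping.keys m \<subseteq> {l..k} \<and> (\<Sum>i\<in>Poly_Mapping.keys m. Poly_Mapping.lookup m i) = nat j}.
        Poly_Mapping.single m 1))"

end

theory Submission
  imports Defs
begin

text \<open>Multiplication by an
  even element acts coefficientwise, so the step
  \<open>\<omega>\<^sub>k\<^sup>a\<^sup>+\<^sup>1 = \<omega>\<^sub>k\<^sub>-\<^sub>1\<^sup>a - x\<^sub>k \<omega>\<^sub>k\<^sup>a\<close> reduces, coefficient by coefficient, to the recurrence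
  \<open>h\<^sub>j(x\<^sub>l,\<dots>,x\<^sub>k) = h\<^sub>j(x\<^sub>l,\<dots>,x\<^sub>k\<^sub>-\<^sub>1) + x\<^sub>k h\<^sub>j\<^sub>-\<^sub>1(x\<^sub>l,\<dots>,x\<^sub>k)\<close>, which splits the monomials
  of degree \<open>j\<close> according to whether \<open>x\<^sub>k\<close> occurs. The term \<open>l = k\<close> missing from
  \<open>\<omega>\<^sub>k\<^sub>-\<^sub>1\<^sup>a\<close> is harmless, as \<open>h\<^sub>j\<close> of no variables vanishes for \<open>j > 0\<close>.\<close>

definition monoms_deg :: "nat \<Rightarrow> nat \<Rightarrow> nat \<Rightarrow> (nat \<Rightarrow>\<^sub>0 nat) set" where
  "monoms_deg d l k = {m. (\<forall>i. i \<notin> {l..k} \<longrightarrow> Poly_Mapping.lookup m i = 0) \<and>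
     (\<Sum>i\<in>{l..k}. Poly_Mapping.lookup m i) = d}"

lemma sum_lookup_keys_eq_sum_superset:
  fixes m :: "'a \<Rightarrow>\<^sub>0 nat"
  assumes "Poly_Mapping.keys m \<subseteq> A" and "finite A"
  shows "(\<Sum>i\<in>Poly_Mapping.keys m. Poly_Mapping.lookup m i) = (\<Sum>i\<in>A. Poly_Mapping.lookup m i)"
  by (rule sum.mono_neutral_left) (use assms in \<open>auto simp: in_keys_iff\<close>)

lemma hcs_eq_sum_monoms_deg:
  "hcs j l k = (if j < 0 then 0 else \<Sum>m\<in>monoms_deg (nat j) l k. Poly_Mapping.single m 1)"
proof -
  have "Poly_Mapping.keys m \<subseteq> {l..k} \<and> (\<Sum>i\<in>Poly_Mapping.keys m. Poly_Mapping.lookup m i) = nat j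
      \<longleftrightarrow> m \<in> monoms_deg (nat j) l k" for m
  proof -
    have "Poly_Mapping.keys m \<subseteq> {l..k} \<longleftrightarrow> (\<forall>i. i \<notin> {l..k} \<longrightarrow> Poly_Mapping.lookup m i = 0)"
      by (auto simp: in_keys_iff)
    then show ?thesis
      using sum_lookup_keys_eq_sum_superset[of m "{l..k}"] by (auto simp: monoms_deg_def)
  qed
  then show ?thesis
    unfolding hcs_def by simp
qed

lemma finite_monoms_deg: "finite (monoms_deg d l k)"
proof -
  have "Poly_Mapping.lookup ` monoms_deg d l k \<subseteq>
      {f. \<forall>i. (i \<in> {l..k} \<longrightarrow> f i \<in> {0..d}) \<and> (i \<notin> {l..k} \<longrightarrow> f i = 0)}"
    by (auto simp: monoms_deg_def intro: order.trans[OF member_le_sum[of _ "{l..k}"]])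
  then have "finite (Poly_Mapping.lookup ` monoms_deg d l k)"
    by (rule finite_subset) (rule finite_set_of_finite_funs; simp)
  then show ?thesis
    by (rule finite_imageD) (auto intro!: inj_onI poly_mapping_eqI)
qed

lemma monoms_deg_0: "monoms_deg 0 l k = {0}"
proof -
  have "m = 0" if "m \<in> monoms_deg 0 l k" for m
  proof (rule poly_mapping_eqI)
    fix i
    show "Poly_Mapping.lookup m i = Poly_Mapping.lookup 0 i"
      using that unfolding monoms_deg_def by (cases "i \<in> {l..k}") auto
  qed
  then show ?thesis
    by (auto simp: monoms_deg_def)
qed

lemma monoms_deg_Suc_right:
  assumes "l \<le> Suc k"
  shows "monoms_deg (Suc d) l (Suc k) =
    monoms_deg (Suc d) l k \<union> (\<lambda>m. m + Poly_Mapping.single (Suc k) 1) ` monoms_deg d l (Suc k)"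
    (is "?L = ?A \<union> ?f ` ?B")
proof -
  have range: "{l..Suc k} = insert (Suc k) {l..k}"
    using assms by auto
  have sum_range: "(\<Sum>i\<in>{l..Suc k}. g i) = g (Suc k) + (\<Sum>i\<in>{l..k}. g i)" for g :: "nat \<Rightarrow> nat"
    unfolding range by simp
  show ?thesis
  proof (intro equalityI subsetI)
    fix m
    assume m: "m \<in> ?L"
    show "m \<in> ?A \<union> ?f ` ?B"
    proof (cases "Poly_Mapping.lookup m (Suc k) = 0")
      case True
      have "Poly_Mapping.lookup m i = 0" if "i \<notin> {l..k}" for i
        using that m True unfolding monoms_deg_def range by (cases "i = Suc k") auto
      then have "m \<in> ?A"
        using m True unfolding monoms_deg_def sum_range by auto
      then show ?thesis ..
    next
      case False
      define m' where "m' = m - Poly_Mapping.single (Suc k) 1"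
      have lookup_m': "Poly_Mapping.lookup m' i = Poly_Mapping.lookup m i - (if i = Suc k then 1 else 0)" for i
        unfolding m'_def by (simp add: lookup_minus lookup_single when_def)
      have "m = ?f m'"
        by (rule poly_mapping_eqI) (use False in \<open>simp add: lookup_add lookup_single lookup_m'\<close>)
      moreover have "m' \<in> ?B"
        using m False unfolding monoms_deg_def sum_range by (auto simp: lookup_m' range)
      ultimately show ?thesis
        by blast
    qed
  next
    fix m
    assume "m \<in> ?A \<union> ?f ` ?B"
    then show "m \<in> ?L"
      unfolding monoms_deg_def sum_range by (auto simp: lookup_add lookup_single when_def range)
  qed
qed

lemma hcs_neg: "j < 0 \<Longrightarrow> hcs j l k = 0"
  by (simp add: hcs_def)

lemma hcs_0: "hcs 0 l k = 1"
  by (simp add: hcs_eq_sum_monoms_deg monoms_deg_0 one_poly_mapping.abs_eq)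

lemma hcs_empty_range: "hcs j (Suc k) k = (if j = 0 then 1 else 0)"
proof (cases j "0::int" rule: linorder_cases)
  case greater
  then have "monoms_deg (nat j) (Suc k) k = {}"
    by (auto simp: monoms_deg_def)
  with greater show ?thesis
    by (simp add: hcs_eq_sum_monoms_deg)
qed (simp_all add: hcs_0 hcs_neg)

lemma hcs_Suc_right:
  assumes "l \<le> Suc k"
  shows "hcs j l (Suc k) = hcs j l k + xvar_poly (Suc k) * hcs (j - 1) l (Suc k)"
proof (cases "j \<le> 0")
  case True
  then show ?thesis
    by (cases "j = 0") (simp_all add: hcs_0 hcs_neg)
next
  case False
  define d where "d = nat j - 1"
  have j: "j = int (Suc d)"
    using False unfolding d_def by simp
  let ?f = "\<lambda>m. m + Poly_Mapping.single (Suc k) 1"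
  let ?sum = "\<lambda>M. \<Sum>m\<in>M. Poly_Mapping.single m (1::int)"
  have disjoint: "monoms_deg (Suc d) l k \<inter> ?f ` monoms_deg d l (Suc k) = {}"
  proof -
    have "Poly_Mapping.lookup m (Suc k) = 0" if "m \<in> monoms_deg (Suc d) l k" for m
      using that by (simp add: monoms_deg_def)
    then show ?thesis
      by (force simp: lookup_add)
  qed
  have "inj_on ?f (monoms_deg d l (Suc k))"
    by (rule inj_onI) simp
  then have shift: "?sum (?f ` monoms_deg d l (Suc k)) = xvar_poly (Suc k) * ?sum (monoms_deg d l (Suc k))"
    by (simp add: sum.reindex sum_distrib_left xvar_poly_def mult_single add.commute)
  have "hcs j l (Suc k) = ?sum (monoms_deg (Suc d) l (Suc k))"
    unfolding hcs_eq_sum_monoms_deg j nat_int by simp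
  also have "\<dots> = ?sum (monoms_deg (Suc d) l k) + ?sum (?f ` monoms_deg d l (Suc k))"
    unfolding monoms_deg_Suc_right[OF assms]
    by (rule sum.union_disjoint[OF finite_monoms_deg finite_imageI[OF finite_monoms_deg] disjoint])
  also have "\<dots> = hcs j l k + xvar_poly (Suc k) * hcs (j - 1) l (Suc k)"
    unfolding shift hcs_eq_sum_monoms_deg j nat_int by simp
  finally show ?thesis .
qed

text \<open>The hypothesis is needed because \<open>rmul\<close> is \<open>0\<close> at infinite index sets,
  where \<open>Pow U\<close> is infinite and the sum degenerates.\<close>

lemma rmul_even_elt:
  assumes "infinite U \<Longrightarrow> f U = 0"
  shows "rmul (even_elt p) f U = p * f U"
proof (cases "finite U")
  case True
  have "rmul (even_elt p) f U = ext_sign {} U * p * f U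
      + (\<Sum>S\<in>Pow U - {{}}. ext_sign S (U - S) * even_elt p S * f (U - S))"
    unfolding rmul_def using True by (subst sum.remove[of _ "{}"]) (auto simp: even_elt_def)
  also have "(\<Sum>S\<in>Pow U - {{}}. ext_sign S (U - S) * even_elt p S * f (U - S)) = 0"
    by (rule sum.neutral) (auto simp: even_elt_def)
  finally show ?thesis
    by (simp add: ext_sign_def)
next
  case False
  then show ?thesis
    using assms by (simp add: rmul_def)
qed

lemma omega_infinite: "infinite U \<Longrightarrow> omega l U = 0"
  by (auto simp: omega_def)

definition omega_lab_expansion :: "nat \<Rightarrow> nat \<Rightarrow> relt" where
  "omega_lab_expansion k a = (\<lambda>U. \<Sum>l\<in>{1..k}.
     (-1) ^ (a + k + l) * hcs (int a + int l - int k) l k * omega l U)"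

lemma omega_lab_expansion_infinite: "infinite U \<Longrightarrow> omega_lab_expansion k a U = 0"
  by (simp add: omega_lab_expansion_def omega_infinite)

lemma omega_lab_expansion_0: "omega_lab_expansion (Suc k) 0 = omega (Suc k)"
proof
  fix U
  have "(\<Sum>l\<in>{1..k}. (-1) ^ (Suc k + l) * hcs (int l - int (Suc k)) l (Suc k) * omega l U) = 0"
    by (rule sum.neutral) (auto simp: hcs_neg)
  then show "omega_lab_expansion (Suc k) 0 U = omega (Suc k) U"
    by (simp add: omega_lab_expansion_def atLeastAtMostSuc_conv hcs_0 flip: mult_2)
qed

lemma omega_lab_expansion_Suc:
  "omega_lab_expansion (Suc k) (Suc a) U =
    omega_lab_expansion k a U - xvar_poly (Suc k) * omega_lab_expansion (Suc k) a U"
proof -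
  let ?x = "xvar_poly (Suc k)"
  let ?s = "\<lambda>l. (-1::xpoly) ^ (Suc a + Suc k + l)"
  let ?j = "\<lambda>l. int (Suc a) + int l - int (Suc k)"
  have lower: "omega_lab_expansion k a U = (\<Sum>l\<in>{1..Suc k}. ?s l * hcs (?j l) l k * omega l U)"
  proof -
    have "omega_lab_expansion k a U = (\<Sum>l\<in>{1..k}. ?s l * hcs (?j l) l k * omega l U)"
      unfolding omega_lab_expansion_def by (rule sum.cong) (auto simp: power_add add_diff_eq)
    then show ?thesis
      by (simp add: atLeastAtMostSuc_conv hcs_empty_range)
  qed
  have upper: "?x * omega_lab_expansion (Suc k) a U =
      - (\<Sum>l\<in>{1..Suc k}. ?s l * (?x * hcs (?j l - 1) l (Suc k)) * omega l U)"
    unfolding omega_lab_expansion_def sum_distrib_left sum_negf[symmetric]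
  proof (rule sum.cong[OF refl])
    fix l
    have degree: "?j l - 1 = int a + int l - int (Suc k)" and sign: "?s l = - ((-1) ^ (a + Suc k + l))"
      by simp_all
    show "?x * ((-1) ^ (a + Suc k + l) * hcs (int a + int l - int (Suc k)) l (Suc k) * omega l U)
        = - (?s l * (?x * hcs (?j l - 1) l (Suc k)) * omega l U)"
      unfolding degree sign by (simp add: mult_ac)
  qed
  have "omega_lab_expansion (Suc k) (Suc a) U =
      (\<Sum>l\<in>{1..Suc k}. ?s l * hcs (?j l) l k * omega l U
        + ?s l * (?x * hcs (?j l - 1) l (Suc k)) * omega l U)"
    unfolding omega_lab_expansion_def
  proof (rule sum.cong[OF refl])
    fix l
    assume "l \<in> {1..Suc k}"
    then have "hcs (?j l) l (Suc k) = hcs (?j l) l k + ?x * hcs (?j l - 1) l (Suc k)"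
      by (intro hcs_Suc_right) simp
    then show "?s l * hcs (?j l) l (Suc k) * omega l U =
        ?s l * hcs (?j l) l k * omega l U + ?s l * (?x * hcs (?j l - 1) l (Suc k)) * omega l U"
      by (simp only: distrib_left distrib_right)
  qed
  then show ?thesis
    by (simp add: lower upper sum.distrib)
qed

lemma omega_lab_eq_expansion: "omega_lab k a = omega_lab_expansion k a"
proof (induction k a rule: omega_lab.induct)
  case (1 a)
  then show ?case
    by (simp add: omega_lab_expansion_def rzero_def)
next
  case (2 k)
  then show ?case
    by (simp add: omega_lab_expansion_0)
next
  case (3 k a)
  then show ?case
    by (simp add: rsub_def xvar_def rmul_even_elt omega_lab_expansion_infinite
        omega_lab_expansion_Suc)
qed

theorem lemma2p3:
  fixes n k a :: nat
  assumes "1 \<le> k" and "k \<le> n"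
  shows "omega_lab k a =
    (\<lambda>U. \<Sum>l\<in>{1..k}.
       rmul (even_elt ((-1) ^ (a + k + l) * hcs (int a + int l - int k) l k)) (omega l) U)"
  by (simp add: omega_lab_eq_expansion omega_lab_expansion_def rmul_even_elt omega_infinite)

end
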